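(* Let $G$ and $H$ be finite connected free graphs. If there exists an onto edge homomorphism from $G$ to $H$, then $\phi(G)\le \phi(H)$.
   Context: All graphs are finite and simple. A homomorphism $f:G\to H$ is a map $f:V(G)\to V(H)$ such that $uv\in E(G)$ implies $f(u)f(v)\in E(H)$; it is an onto edge homomorphism if every edge of $H$ equals $f(x)f(y)$ for some edge $xy\in E(G)$. An independent set of a graph $G$ is called a free independent set if it is contained in at least two distinct maximal independent sets of $G$. A graph $G$ is free if every vertex of $G$ lies in some free independent set. The free chromatic number $\phi(G)$ is the minimum positive integer $t$ such that $V(G)=V_1\cup\cdots\cup V_t$ is a partition of $V(G)$ into sets each of which is a free independent set of $G$; if $G$ is not free, $\phi(G)=\infty$. *)

theory Defs
  imports Main "HOL-Library.Disjoint_Sets" "HOL-Library.Extended_Nat"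
begin

definition fin_simple_graph :: "'a set \<Rightarrow> ('a \<Rightarrow> 'a \<Rightarrow> bool) \<Rightarrow> bool" where
  "fin_simple_graph V E \<longleftrightarrow> finite V \<and>
     (\<forall>x y. E x y \<longrightarrow> x \<in> V \<and> y \<in> V \<and> x \<noteq> y \<and> E y x)"

definition graph_connected :: "'a set \<Rightarrow> ('a \<Rightarrow> 'a \<Rightarrow> bool) \<Rightarrow> bool" where
  "graph_connected V E \<longleftrightarrow> V \<noteq> {} \<and> (\<forall>u\<in>V. \<forall>v\<in>V. E\<^sup>*\<^sup>* u v)"

definition graph_hom :: "'a set \<Rightarrow> ('a \<Rightarrow> 'a \<Rightarrow> bool) \<Rightarrow> 'b set \<Rightarrow> ('b \<Rightarrow> 'b \<Rightarrow> bool) \<Rightarrow> ('a \<Rightarrow> 'b) \<Rightarrow> bool" where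
  "graph_hom VG EG VH EH f \<longleftrightarrow> (\<forall>v\<in>VG. f v \<in> VH) \<and> (\<forall>u v. EG u v \<longrightarrow> EH (f u) (f v))"

definition onto_edge_hom :: "'a set \<Rightarrow> ('a \<Rightarrow> 'a \<Rightarrow> bool) \<Rightarrow> 'b set \<Rightarrow> ('b \<Rightarrow> 'b \<Rightarrow> bool) \<Rightarrow> ('a \<Rightarrow> 'b) \<Rightarrow> bool" where
  "onto_edge_hom VG EG VH EH f \<longleftrightarrow> graph_hom VG EG VH EH f \<and>
     (\<forall>a b. EH a b \<longrightarrow> (\<exists>x y. EG x y \<and> {f x, f y} = {a, b}))"

definition indep_set :: "'a set \<Rightarrow> ('a \<Rightarrow> 'a \<Rightarrow> bool) \<Rightarrow> 'a set \<Rightarrow> bool" where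
  "indep_set V E S \<longleftrightarrow> S \<subseteq> V \<and> (\<forall>x\<in>S. \<forall>y\<in>S. \<not> E x y)"

definition max_indep_set :: "'a set \<Rightarrow> ('a \<Rightarrow> 'a \<Rightarrow> bool) \<Rightarrow> 'a set \<Rightarrow> bool" where
  "max_indep_set V E S \<longleftrightarrow> indep_set V E S \<and> (\<forall>T. indep_set V E T \<and> S \<subseteq> T \<longrightarrow> T = S)"

definition free_indep_set :: "'a set \<Rightarrow> ('a \<Rightarrow> 'a \<Rightarrow> bool) \<Rightarrow> 'a set \<Rightarrow> bool" where
  "free_indep_set V E S \<longleftrightarrow> indep_set V E S \<and>
     (\<exists>M1 M2. M1 \<noteq> M2 \<and> max_indep_set V E M1 \<and> max_indep_set V E M2 \<and> S \<subseteq> M1 \<and> S \<subseteq> M2)"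

definition free_graph :: "'a set \<Rightarrow> ('a \<Rightarrow> 'a \<Rightarrow> bool) \<Rightarrow> bool" where
  "free_graph V E \<longleftrightarrow> (\<forall>v\<in>V. \<exists>S. free_indep_set V E S \<and> v \<in> S)"

text \<open>Free chromatic number: minimum number of blocks of a partition of V into
  free independent sets; infinity if no such partition exists (Inf of empty set).\<close>
definition free_chromatic_number :: "'a set \<Rightarrow> ('a \<Rightarrow> 'a \<Rightarrow> bool) \<Rightarrow> enat" where
  "free_chromatic_number V E =
     (INF P \<in> {P. partition_on V P \<and> (\<forall>S\<in>P. free_indep_set V E S)}. enat (card P))"

end

theory Submission
  imports Defs
begin

text \<open>The preimage under an onto edge homomorphism f of a free independent set S of H is a free
  independent set of G: the preimages of two distinct maximal independent sets containing S
  extend to maximal independent sets of G, and these stay distinct because some edge of H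
  joins the two sets and is the image of an edge of G. Pulling back an optimal partition of H
  into free independent sets and discarding empty blocks thus gives a partition of G with at
  most as many blocks.\<close>

lemma indep_set_extends_to_max_indep_set:
  assumes "finite V" "indep_set V E S"
  shows "\<exists>M. max_indep_set V E M \<and> S \<subseteq> M"
  using assms(2)
proof (induction "card (V - S)" arbitrary: S rule: less_induct)
  case less
  show ?case
  proof (cases "max_indep_set V E S")
    case False
    then obtain T where T: "indep_set V E T" "S \<subseteq> T" "T \<noteq> S"
      using less.prems unfolding max_indep_set_def by blast
    have "V - T \<subset> V - S"
      using T less.prems unfolding indep_set_def by blast
    then have "card (V - T) < card (V - S)"
      using assms(1) by (meson finite_Diff psubset_card_mono)
    with less.hyps T show ?thesis by blast
  qed blast
qed

lemma distinct_max_indep_sets_joined_by_edge: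
  assumes "max_indep_set V E M1" "max_indep_set V E M2" "M1 \<noteq> M2"
  shows "\<exists>a\<in>M1. \<exists>b\<in>M2. E a b \<or> E b a"
proof (rule ccontr)
  assume no_edge: "\<not> ?thesis"
  have "indep_set V E M1" "indep_set V E M2"
    using assms(1,2) unfolding max_indep_set_def by simp_all
  with no_edge have "indep_set V E (M1 \<union> M2)"
    unfolding indep_set_def by blast
  with assms(1,2) have "M1 \<union> M2 = M1" "M1 \<union> M2 = M2"
    unfolding max_indep_set_def by blast+
  with assms(3) show False by simp
qed

lemma graph_hom_indep_set_vimage:
  assumes "graph_hom VG EG VH EH f" "indep_set VH EH T"
  shows "indep_set VG EG (VG \<inter> f -` T)"
  using assms unfolding graph_hom_def indep_set_def by blast

lemma onto_edge_hom_free_indep_set_vimage: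
  assumes G: "fin_simple_graph VG EG" and f: "onto_edge_hom VG EG VH EH f"
    and S: "free_indep_set VH EH S"
  shows "free_indep_set VG EG (VG \<inter> f -` S)"
proof -
  have hom: "graph_hom VG EG VH EH f"
    using f unfolding onto_edge_hom_def by blast
  have "finite VG"
    using G unfolding fin_simple_graph_def by blast
  have max_vimage: "\<exists>N. max_indep_set VG EG N \<and> VG \<inter> f -` M \<subseteq> N"
    if "max_indep_set VH EH M" for M
  proof -
    have "indep_set VH EH M"
      using that unfolding max_indep_set_def by simp
    then show ?thesis
      using indep_set_extends_to_max_indep_set[OF \<open>finite VG\<close>] graph_hom_indep_set_vimage[OF hom]
      by blast
  qed
  obtain M1 M2 where M: "M1 \<noteq> M2" "max_indep_set VH EH M1" "max_indep_set VH EH M2"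
    "S \<subseteq> M1" "S \<subseteq> M2"
    using S unfolding free_indep_set_def by blast
  obtain N1 where N1: "max_indep_set VG EG N1" "VG \<inter> f -` M1 \<subseteq> N1"
    using max_vimage[OF M(2)] by blast
  obtain N2 where N2: "max_indep_set VG EG N2" "VG \<inter> f -` M2 \<subseteq> N2"
    using max_vimage[OF M(3)] by blast
  obtain a b where ab: "a \<in> M1" "b \<in> M2" "EH a b \<or> EH b a"
    using distinct_max_indep_sets_joined_by_edge[OF M(2,3,1)] by blast
  obtain x y where xy: "EG x y" "f x = a" "f y = b"
  proof -
    have "\<exists>x y. EG x y \<and> {f x, f y} = {c, d}" if "EH c d" for c d
      using that f unfolding onto_edge_hom_def by blast
    then obtain x y where "EG x y" "{f x, f y} = {a, b}"
      using ab(3) insert_commute by metis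
    moreover have "EG y x"
      using \<open>EG x y\<close> G unfolding fin_simple_graph_def by blast
    ultimately show thesis
      using that unfolding doubleton_eq_iff by blast
  qed
  have "x \<in> VG" "y \<in> VG"
    using G xy(1) unfolding fin_simple_graph_def by blast+
  with xy ab N1(2) N2(2) have "x \<in> N1" "y \<in> N2" by blast+
  moreover have "indep_set VG EG N1"
    using N1(1) unfolding max_indep_set_def by simp
  ultimately have "N1 \<noteq> N2"
    using xy(1) unfolding indep_set_def by blast
  moreover have "indep_set VG EG (VG \<inter> f -` S)"
    using graph_hom_indep_set_vimage[OF hom] S unfolding free_indep_set_def by blast
  moreover have "VG \<inter> f -` S \<subseteq> N1" "VG \<inter> f -` S \<subseteq> N2"
    using M(4,5) N1(2) N2(2) by blast+
  ultimately show ?thesis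
    unfolding free_indep_set_def using N1(1) N2(1) by blast
qed

lemma partition_on_restrict_vimage:
  assumes "partition_on B P" "f ` A \<subseteq> B"
  shows "partition_on A ((\<lambda>S. A \<inter> f -` S) ` P - {{}})"
proof -
  have "partition_on (A \<inter> f -` B) ((\<inter>) A ` ((-`) f ` P - {{}}) - {{}})"
    using partition_on_restrict[OF partition_on_vimage[OF assms(1)]] .
  moreover have "A \<inter> f -` B = A"
    using assms(2) by blast
  moreover have "(\<inter>) A ` ((-`) f ` P - {{}}) - {{}} = (\<lambda>S. A \<inter> f -` S) ` P - {{}}"
    by auto
  ultimately show ?thesis by simp
qed

theorem mainTheorem1:
  fixes VG :: "'a set" and EG :: "'a \<Rightarrow> 'a \<Rightarrow> bool"
    and VH :: "'b set" and EH :: "'b \<Rightarrow> 'b \<Rightarrow> bool"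
  assumes "fin_simple_graph VG EG" and "graph_connected VG EG" and "free_graph VG EG"
    and "fin_simple_graph VH EH" and "graph_connected VH EH" and "free_graph VH EH"
    and "\<exists>f. onto_edge_hom VG EG VH EH f"
  shows "free_chromatic_number VG EG \<le> free_chromatic_number VH EH"
  unfolding free_chromatic_number_def
proof (rule INF_greatest)
  obtain f where f: "onto_edge_hom VG EG VH EH f"
    using assms(7) by blast
  fix P assume "P \<in> {P. partition_on VH P \<and> (\<forall>S\<in>P. free_indep_set VH EH S)}"
  then have P: "partition_on VH P" "\<forall>S\<in>P. free_indep_set VH EH S" by auto
  define Q where "Q = (\<lambda>S. VG \<inter> f -` S) ` P - {{}}"
  have "f ` VG \<subseteq> VH"
    using f unfolding onto_edge_hom_def graph_hom_def by blast
  then have "partition_on VG Q"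
    unfolding Q_def by (rule partition_on_restrict_vimage[OF P(1)])
  moreover have "\<forall>S\<in>Q. free_indep_set VG EG S"
    unfolding Q_def using onto_edge_hom_free_indep_set_vimage[OF assms(1) f] P(2) by blast
  moreover have "finite P"
    using finite_elements[OF _ P(1)] assms(4) unfolding fin_simple_graph_def by blast
  then have "card Q \<le> card P"
    unfolding Q_def by (meson card_Diff1_le card_image_le finite_imageI le_trans)
  ultimately have "enat (card Q) \<le> enat (card P)"
    and "Q \<in> {Q. partition_on VG Q \<and> (\<forall>S\<in>Q. free_indep_set VG EG S)}"
    by simp_all
  then show "(INF Q \<in> {Q. partition_on VG Q \<and> (\<forall>S\<in>Q. free_indep_set VG EG S)}.
      enat (card Q)) \<le> enat (card P)"
    by (rule INF_lower2[rotated])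
qed

end
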